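(* Let $\mathcal{A}$ be an abelian category with enough projective and enough injective objects. If both $\mathrm{spdi}(\mathcal{A})$ and $\mathrm{sidp}(\mathcal{A})$ are finite, then $\mathrm{spdi}(\mathcal{A})=\mathrm{sidp}(\mathcal{A})$.
   Context: $\mathrm{spdi}(\mathcal{A})$ is the supremum of the projective dimensions of all injective objects of $\mathcal{A}$; $\mathrm{sidp}(\mathcal{A})$ is the supremum of the injective dimensions of all projective objects of $\mathcal{A}$. *)

theory Defs
  imports Main "HOL-Library.Extended_Nat"
begin

record ('o, 'm) cat =
  Ob  :: "'o set"
  Ar  :: "'m set"
  dom :: "'m \<Rightarrow> 'o"
  cod :: "'m \<Rightarrow> 'o"
  cmp :: "'m \<Rightarrow> 'm \<Rightarrow> 'm"   (* cmp C g f = g \<circ> f *)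
  idm :: "'o \<Rightarrow> 'm"
  add :: "'m \<Rightarrow> 'm \<Rightarrow> 'm"
  ngt :: "'m \<Rightarrow> 'm"
  zer :: "'o \<Rightarrow> 'o \<Rightarrow> 'm"

definition hom :: "('o, 'm) cat \<Rightarrow> 'o \<Rightarrow> 'o \<Rightarrow> 'm set" where
  "hom C X Y = {f \<in> Ar C. dom C f = X \<and> cod C f = Y}"

definition category :: "('o, 'm) cat \<Rightarrow> bool" where
  "category C \<longleftrightarrow>
     (\<forall>f \<in> Ar C. dom C f \<in> Ob C \<and> cod C f \<in> Ob C) \<and>
     (\<forall>X \<in> Ob C. idm C X \<in> hom C X X) \<and>
     (\<forall>X \<in> Ob C. \<forall>Y \<in> Ob C. \<forall>Z \<in> Ob C. \<forall>f \<in> hom C X Y. \<forall>g \<in> hom C Y Z.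
        cmp C g f \<in> hom C X Z) \<and>
     (\<forall>f \<in> Ar C. \<forall>g \<in> Ar C. \<forall>h \<in> Ar C. cod C f = dom C g \<and> cod C g = dom C h \<longrightarrow>
        cmp C h (cmp C g f) = cmp C (cmp C h g) f) \<and>
     (\<forall>f \<in> Ar C. cmp C f (idm C (dom C f)) = f \<and> cmp C (idm C (cod C f)) f = f)"

definition preadditive :: "('o, 'm) cat \<Rightarrow> bool" where
  "preadditive C \<longleftrightarrow> category C \<and>
     (\<forall>X \<in> Ob C. \<forall>Y \<in> Ob C.
        zer C X Y \<in> hom C X Y \<and>
        (\<forall>f \<in> hom C X Y. \<forall>g \<in> hom C X Y. add C f g \<in> hom C X Y \<and> add C f g = add C g f) \<and>
        (\<forall>f \<in> hom C X Y. \<forall>g \<in> hom C X Y. \<forall>h \<in> hom C X Y.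
            add C (add C f g) h = add C f (add C g h)) \<and>
        (\<forall>f \<in> hom C X Y. add C f (zer C X Y) = f \<and> ngt C f \<in> hom C X Y \<and>
            add C f (ngt C f) = zer C X Y)) \<and>
     (\<forall>X \<in> Ob C. \<forall>Y \<in> Ob C. \<forall>Z \<in> Ob C. \<forall>f \<in> hom C X Y. \<forall>g \<in> hom C X Y. \<forall>h \<in> hom C Y Z.
        cmp C h (add C f g) = add C (cmp C h f) (cmp C h g)) \<and>
     (\<forall>X \<in> Ob C. \<forall>Y \<in> Ob C. \<forall>Z \<in> Ob C. \<forall>k \<in> hom C X Y. \<forall>f \<in> hom C Y Z. \<forall>g \<in> hom C Y Z.
        cmp C (add C f g) k = add C (cmp C f k) (cmp C g k))"

definition zero_object :: "('o, 'm) cat \<Rightarrow> 'o \<Rightarrow> bool" where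
  "zero_object C Z \<longleftrightarrow> Z \<in> Ob C \<and>
     (\<forall>X \<in> Ob C. (\<exists>!f. f \<in> hom C Z X) \<and> (\<exists>!f. f \<in> hom C X Z))"

definition biproduct :: "('o, 'm) cat \<Rightarrow> 'o \<Rightarrow> 'o \<Rightarrow> 'o \<Rightarrow> 'm \<Rightarrow> 'm \<Rightarrow> 'm \<Rightarrow> 'm \<Rightarrow> bool" where
  "biproduct C X Y S i1 i2 p1 p2 \<longleftrightarrow> S \<in> Ob C \<and>
     i1 \<in> hom C X S \<and> i2 \<in> hom C Y S \<and> p1 \<in> hom C S X \<and> p2 \<in> hom C S Y \<and>
     cmp C p1 i1 = idm C X \<and> cmp C p2 i2 = idm C Y \<and>
     cmp C p1 i2 = zer C Y X \<and> cmp C p2 i1 = zer C X Y \<and>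
     add C (cmp C i1 p1) (cmp C i2 p2) = idm C S"

definition additive :: "('o, 'm) cat \<Rightarrow> bool" where
  "additive C \<longleftrightarrow> preadditive C \<and> (\<exists>Z. zero_object C Z) \<and>
     (\<forall>X \<in> Ob C. \<forall>Y \<in> Ob C. \<exists>S i1 i2 p1 p2. biproduct C X Y S i1 i2 p1 p2)"

definition mono :: "('o, 'm) cat \<Rightarrow> 'm \<Rightarrow> bool" where
  "mono C f \<longleftrightarrow> f \<in> Ar C \<and>
     (\<forall>g \<in> Ar C. \<forall>h \<in> Ar C. cod C g = dom C f \<and> cod C h = dom C f \<and> dom C g = dom C h \<and>
        cmp C f g = cmp C f h \<longrightarrow> g = h)"

definition epi :: "('o, 'm) cat \<Rightarrow> 'm \<Rightarrow> bool" where
  "epi C f \<longleftrightarrow> f \<in> Ar C \<and>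
     (\<forall>g \<in> Ar C. \<forall>h \<in> Ar C. dom C g = cod C f \<and> dom C h = cod C f \<and> cod C g = cod C h \<and>
        cmp C g f = cmp C h f \<longrightarrow> g = h)"

definition is_kernel :: "('o, 'm) cat \<Rightarrow> 'm \<Rightarrow> 'm \<Rightarrow> bool" where
  "is_kernel C f k \<longleftrightarrow> f \<in> Ar C \<and> k \<in> Ar C \<and> cod C k = dom C f \<and>
     cmp C f k = zer C (dom C k) (cod C f) \<and>
     (\<forall>h \<in> Ar C. cod C h = dom C f \<and> cmp C f h = zer C (dom C h) (cod C f) \<longrightarrow>
        (\<exists>!u. u \<in> hom C (dom C h) (dom C k) \<and> cmp C k u = h))"

definition is_cokernel :: "('o, 'm) cat \<Rightarrow> 'm \<Rightarrow> 'm \<Rightarrow> bool" where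
  "is_cokernel C f c \<longleftrightarrow> f \<in> Ar C \<and> c \<in> Ar C \<and> dom C c = cod C f \<and>
     cmp C c f = zer C (dom C f) (cod C c) \<and>
     (\<forall>h \<in> Ar C. dom C h = cod C f \<and> cmp C h f = zer C (dom C f) (cod C h) \<longrightarrow>
        (\<exists>!u. u \<in> hom C (cod C c) (cod C h) \<and> cmp C u c = h))"

definition abelian :: "('o, 'm) cat \<Rightarrow> bool" where
  "abelian C \<longleftrightarrow> additive C \<and>
     (\<forall>f \<in> Ar C. (\<exists>k. is_kernel C f k) \<and> (\<exists>c. is_cokernel C f c)) \<and>
     (\<forall>f. mono C f \<longrightarrow> (\<exists>g. is_kernel C g f)) \<and>
     (\<forall>f. epi C f \<longrightarrow> (\<exists>g. is_cokernel C g f))"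

definition projective :: "('o, 'm) cat \<Rightarrow> 'o \<Rightarrow> bool" where
  "projective C P \<longleftrightarrow> P \<in> Ob C \<and>
     (\<forall>e f. epi C e \<and> f \<in> hom C P (cod C e) \<longrightarrow> (\<exists>g \<in> hom C P (dom C e). cmp C e g = f))"

definition injective :: "('o, 'm) cat \<Rightarrow> 'o \<Rightarrow> bool" where
  "injective C I \<longleftrightarrow> I \<in> Ob C \<and>
     (\<forall>m f. mono C m \<and> f \<in> hom C (dom C m) I \<longrightarrow> (\<exists>g \<in> hom C (cod C m) I. cmp C g m = f))"

definition enough_projectives :: "('o, 'm) cat \<Rightarrow> bool" where
  "enough_projectives C \<longleftrightarrow>
     (\<forall>X \<in> Ob C. \<exists>P e. projective C P \<and> e \<in> hom C P X \<and> epi C e)"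

definition enough_injectives :: "('o, 'm) cat \<Rightarrow> bool" where
  "enough_injectives C \<longleftrightarrow>
     (\<forall>X \<in> Ob C. \<exists>I m. injective C I \<and> m \<in> hom C X I \<and> mono C m)"

text \<open>Exactness of A --f--> B --g--> D at B: g f = 0 and coker(f) ker(g) = 0
(i.e. im f = ker g).\<close>
definition exact_at :: "('o, 'm) cat \<Rightarrow> 'm \<Rightarrow> 'm \<Rightarrow> bool" where
  "exact_at C f g \<longleftrightarrow> f \<in> Ar C \<and> g \<in> Ar C \<and> cod C f = dom C g \<and>
     cmp C g f = zer C (dom C f) (cod C g) \<and>
     (\<forall>k c. is_kernel C g k \<and> is_cokernel C f c \<longrightarrow> cmp C c k = zer C (dom C k) (cod C c))"

text \<open>A projective resolution of length n:
  0 \<rightarrow> P n --d n--> P (n-1) \<rightarrow> ... \<rightarrow> P 0 --d 0--> X \<rightarrow> 0 exact, all P i projective.\<close>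
definition proj_resolution :: "('o, 'm) cat \<Rightarrow> 'o \<Rightarrow> nat \<Rightarrow> (nat \<Rightarrow> 'o) \<Rightarrow> (nat \<Rightarrow> 'm) \<Rightarrow> bool" where
  "proj_resolution C X n P d \<longleftrightarrow>
     (\<forall>i \<le> n. projective C (P i)) \<and>
     d 0 \<in> hom C (P 0) X \<and>
     (\<forall>i < n. d (Suc i) \<in> hom C (P (Suc i)) (P i)) \<and>
     epi C (d 0) \<and> mono C (d n) \<and>
     (\<forall>i < n. exact_at C (d (Suc i)) (d i))"

text \<open>An injective coresolution of length n:
  0 \<rightarrow> X --d 0--> I 0 \<rightarrow> ... \<rightarrow> I (n-1) --d n--> I n \<rightarrow> 0 exact, all I i injective.\<close>
definition inj_resolution :: "('o, 'm) cat \<Rightarrow> 'o \<Rightarrow> nat \<Rightarrow> (nat \<Rightarrow> 'o) \<Rightarrow> (nat \<Rightarrow> 'm) \<Rightarrow> bool" where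
  "inj_resolution C X n I d \<longleftrightarrow>
     (\<forall>i \<le> n. injective C (I i)) \<and>
     d 0 \<in> hom C X (I 0) \<and>
     (\<forall>i < n. d (Suc i) \<in> hom C (I i) (I (Suc i))) \<and>
     mono C (d 0) \<and> epi C (d n) \<and>
     (\<forall>i < n. exact_at C (d i) (d (Suc i)))"

definition proj_dim :: "('o, 'm) cat \<Rightarrow> 'o \<Rightarrow> enat" where
  "proj_dim C X = (INF n \<in> {n. \<exists>P d. proj_resolution C X n P d}. enat n)"

definition inj_dim :: "('o, 'm) cat \<Rightarrow> 'o \<Rightarrow> enat" where
  "inj_dim C X = (INF n \<in> {n. \<exists>I d. inj_resolution C X n I d}. enat n)"

definition spdi :: "('o, 'm) cat \<Rightarrow> enat" where
  "spdi C = (SUP I \<in> {I. injective C I}. proj_dim C I)"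

definition sidp :: "('o, 'm) cat \<Rightarrow> enat" where
  "sidp C = (SUP P \<in> {P. projective C P}. inj_dim C P)"

end

theory Submission
  imports Defs
begin

text \<open>If every injective has projective dimension at most \<open>n\<close>, then every object \<open>X\<close> of finite
  injective dimension has injective dimension at most \<open>n\<close>. Indeed, let
  \<open>0 \<rightarrow> X \<rightarrow> I\<^sub>0 \<rightarrow> \<dots> \<rightarrow> I\<^sub>m \<rightarrow> 0\<close> be an injective coresolution of minimal length \<open>m\<close> and
  suppose \<open>m > n\<close>. Dimension shifting along a projective resolution of \<open>I\<^sub>m\<close> of length
  \<open>\<le> n\<close> shows that the last differential \<open>I\<^sub>m\<^sub>-\<^sub>1 \<rightarrow> I\<^sub>m\<close> splits; its kernel is then a
  direct summand of \<open>I\<^sub>m\<^sub>-\<^sub>1\<close>, hence injective, and the coresolution can be shortened.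
  Applied to projective objects this gives \<open>sidp \<le> spdi\<close>, and the reverse inequality is the same
  statement in the opposite category.\<close>

lemma INF_enat_le_iff: "(INF n \<in> S. enat n) \<le> enat k \<longleftrightarrow> (\<exists>n \<in> S. n \<le> k)"
proof
  assume le: "(INF n \<in> S. enat n) \<le> enat k"
  then obtain n0 where "n0 \<in> S" by (cases "S = {}") (auto simp: top_enat_def)
  then have L: "(LEAST n. n \<in> S) \<in> S" by (rule LeastI)
  have "enat (LEAST n. n \<in> S) \<le> (INF n \<in> S. enat n)" by (rule INF_greatest) (simp add: Least_le)
  with le have "(LEAST n. n \<in> S) \<le> k" by (metis enat_ord_simps(1) order_trans)
  with L show "\<exists>n \<in> S. n \<le> k" by blast
qed (auto intro: INF_lower2)

lemma homD: "f \<in> hom C X Y \<Longrightarrow> f \<in> Ar C \<and> dom C f = X \<and> cod C f = Y"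
  by (simp add: hom_def)

locale abelian_category =
  fixes C :: "('o, 'm) cat"
  assumes abelian: "abelian C"
begin

lemma is_preadditive: "preadditive C"
  using abelian unfolding abelian_def additive_def by blast

lemma is_category: "category C"
  using is_preadditive unfolding preadditive_def by blast

lemma hom_objects: "f \<in> hom C X Y \<Longrightarrow> X \<in> Ob C \<and> Y \<in> Ob C"
  using is_category by (auto simp: category_def hom_def)

lemma comp_in_hom [intro]: "f \<in> hom C X Y \<Longrightarrow> g \<in> hom C Y Z \<Longrightarrow> cmp C g f \<in> hom C X Z"
  using is_category hom_objects[of f X Y] hom_objects[of g Y Z] unfolding category_def by blast

lemma comp_assoc: "f \<in> hom C X Y \<Longrightarrow> g \<in> hom C Y Z \<Longrightarrow> h \<in> hom C Z W \<Longrightarrow>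
    cmp C h (cmp C g f) = cmp C (cmp C h g) f"
  using is_category unfolding category_def hom_def by auto

lemma id_in_hom: "X \<in> Ob C \<Longrightarrow> idm C X \<in> hom C X X"
  using is_category unfolding category_def by auto

lemma id_comp: "f \<in> hom C X Y \<Longrightarrow> cmp C (idm C Y) f = f"
  using is_category unfolding category_def hom_def by auto

lemma comp_id: "f \<in> hom C X Y \<Longrightarrow> cmp C f (idm C X) = f"
  using is_category unfolding category_def hom_def by auto

lemma zero_in_hom: "X \<in> Ob C \<Longrightarrow> Y \<in> Ob C \<Longrightarrow> zer C X Y \<in> hom C X Y"
  using is_preadditive unfolding preadditive_def by auto

lemma add_in_hom: "f \<in> hom C X Y \<Longrightarrow> g \<in> hom C X Y \<Longrightarrow> add C f g \<in> hom C X Y"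
  using is_preadditive hom_objects[of f X Y] unfolding preadditive_def by blast

lemma add_commute: "f \<in> hom C X Y \<Longrightarrow> g \<in> hom C X Y \<Longrightarrow> add C f g = add C g f"
  using is_preadditive hom_objects[of f X Y] unfolding preadditive_def by blast

lemma add_assoc: "f \<in> hom C X Y \<Longrightarrow> g \<in> hom C X Y \<Longrightarrow> h \<in> hom C X Y \<Longrightarrow>
    add C (add C f g) h = add C f (add C g h)"
  using is_preadditive hom_objects[of f X Y] unfolding preadditive_def by blast

lemma add_zero: "f \<in> hom C X Y \<Longrightarrow> add C f (zer C X Y) = f"
  using is_preadditive hom_objects[of f X Y] unfolding preadditive_def by blast

lemma neg_in_hom: "f \<in> hom C X Y \<Longrightarrow> ngt C f \<in> hom C X Y"
  using is_preadditive hom_objects[of f X Y] unfolding preadditive_def by blast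

lemma add_neg: "f \<in> hom C X Y \<Longrightarrow> add C f (ngt C f) = zer C X Y"
  using is_preadditive hom_objects[of f X Y] unfolding preadditive_def by blast

lemma comp_add: "f \<in> hom C X Y \<Longrightarrow> g \<in> hom C X Y \<Longrightarrow> h \<in> hom C Y Z \<Longrightarrow>
    cmp C h (add C f g) = add C (cmp C h f) (cmp C h g)"
  using is_preadditive hom_objects[of f X Y] hom_objects[of h Y Z]
  unfolding preadditive_def by blast

lemma add_comp: "k \<in> hom C X Y \<Longrightarrow> f \<in> hom C Y Z \<Longrightarrow> g \<in> hom C Y Z \<Longrightarrow>
    cmp C (add C f g) k = add C (cmp C f k) (cmp C g k)"
  using is_preadditive hom_objects[of k X Y] hom_objects[of f Y Z]
  unfolding preadditive_def by blast

lemma zero_add: "f \<in> hom C X Y \<Longrightarrow> add C (zer C X Y) f = f"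
  using add_commute add_zero zero_in_hom hom_objects by metis

lemma add_self_eq_zero: assumes x: "x \<in> hom C X Y" and e: "add C x x = x" shows "x = zer C X Y"
proof -
  have "x = add C x (add C x (ngt C x))" using add_neg[OF x] add_zero[OF x] by simp
  also have "\<dots> = add C (add C x x) (ngt C x)" using add_assoc x neg_in_hom by metis
  also have "\<dots> = zer C X Y" using e add_neg[OF x] by simp
  finally show ?thesis .
qed

lemma comp_zero: assumes h: "h \<in> hom C Y Z" and X: "X \<in> Ob C"
  shows "cmp C h (zer C X Y) = zer C X Z"
proof -
  have z: "zer C X Y \<in> hom C X Y" using zero_in_hom X hom_objects h by blast
  have "cmp C h (zer C X Y) = cmp C h (add C (zer C X Y) (zer C X Y))" using add_zero z by simp
  also have "\<dots> = add C (cmp C h (zer C X Y)) (cmp C h (zer C X Y))" using comp_add z h by blast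
  finally show ?thesis using add_self_eq_zero comp_in_hom z h by metis
qed

lemma zero_comp: assumes k: "k \<in> hom C X Y" and Z: "Z \<in> Ob C"
  shows "cmp C (zer C Y Z) k = zer C X Z"
proof -
  have z: "zer C Y Z \<in> hom C Y Z" using zero_in_hom Z hom_objects k by blast
  have "cmp C (zer C Y Z) k = cmp C (add C (zer C Y Z) (zer C Y Z)) k" using add_zero z by simp
  also have "\<dots> = add C (cmp C (zer C Y Z) k) (cmp C (zer C Y Z) k)" using add_comp z k by blast
  finally show ?thesis using add_self_eq_zero comp_in_hom z k by metis
qed

lemma neg_unique: assumes a: "a \<in> hom C X Y" and b: "b \<in> hom C X Y" and s: "add C a b = zer C X Y"
  shows "b = ngt C a"
proof -
  have "b = add C b (add C a (ngt C a))" using add_zero b add_neg a by simp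
  also have "\<dots> = add C (add C a b) (ngt C a)" using add_assoc add_commute a b neg_in_hom by metis
  also have "\<dots> = ngt C a" using s zero_add neg_in_hom a by simp
  finally show ?thesis .
qed

lemma neg_zero: "X \<in> Ob C \<Longrightarrow> Y \<in> Ob C \<Longrightarrow> ngt C (zer C X Y) = zer C X Y"
  using neg_unique zero_in_hom add_zero by metis

lemma comp_neg: assumes f: "f \<in> hom C X Y" and h: "h \<in> hom C Y Z"
  shows "cmp C h (ngt C f) = ngt C (cmp C h f)"
proof -
  have "add C (cmp C h f) (cmp C h (ngt C f)) = cmp C h (add C f (ngt C f))"
    using comp_add f neg_in_hom h by metis
  also have "\<dots> = zer C X Z" using add_neg f comp_zero h hom_objects by metis
  finally show ?thesis using neg_unique comp_in_hom f h neg_in_hom by metis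
qed

lemma neg_comp: assumes k: "k \<in> hom C X Y" and f: "f \<in> hom C Y Z"
  shows "cmp C (ngt C f) k = ngt C (cmp C f k)"
proof -
  have "add C (cmp C f k) (cmp C (ngt C f) k) = cmp C (add C f (ngt C f)) k"
    using add_comp f neg_in_hom k by metis
  also have "\<dots> = zer C X Z" using add_neg f zero_comp k hom_objects by metis
  finally show ?thesis using neg_unique comp_in_hom f k neg_in_hom by metis
qed

lemma eq_if_add_neg_eq_zero: assumes a: "a \<in> hom C X Y" and b: "b \<in> hom C X Y"
  and s: "add C a (ngt C b) = zer C X Y" shows "a = b"
proof -
  have "a = add C a (add C (ngt C b) b)" using add_zero a add_neg b add_commute neg_in_hom by metis
  also have "\<dots> = add C (add C a (ngt C b)) b" using add_assoc a b neg_in_hom by metis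
  also have "\<dots> = b" using s zero_add b by simp
  finally show ?thesis .
qed

lemma kernel_in_hom: "is_kernel C g k \<Longrightarrow> g \<in> hom C B D \<Longrightarrow> k \<in> hom C (dom C k) B"
  unfolding is_kernel_def hom_def by auto

lemma comp_kernel_eq_zero: "is_kernel C g k \<Longrightarrow> g \<in> hom C B D \<Longrightarrow> cmp C g k = zer C (dom C k) D"
  unfolding is_kernel_def hom_def by auto

lemma kernel_universal:
  assumes "is_kernel C g k" and "g \<in> hom C B D" and "h \<in> hom C W B" and "cmp C g h = zer C W D"
  shows "\<exists>!u. u \<in> hom C W (dom C k) \<and> cmp C k u = h"
proof -
  have "h \<in> Ar C" "dom C h = W" "cod C h = B" "dom C g = B" "cod C g = D"
    using assms(2,3) unfolding hom_def by auto
  with assms(1,4) show ?thesis unfolding is_kernel_def by metis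
qed

lemma kernel_factor: "is_kernel C g k \<Longrightarrow> g \<in> hom C B D \<Longrightarrow> h \<in> hom C W B \<Longrightarrow>
    cmp C g h = zer C W D \<Longrightarrow> \<exists>u \<in> hom C W (dom C k). cmp C k u = h"
  using kernel_universal by blast

lemma kernel_factor_unique: "is_kernel C g k \<Longrightarrow> g \<in> hom C B D \<Longrightarrow> h \<in> hom C W B \<Longrightarrow>
    cmp C g h = zer C W D \<Longrightarrow> u \<in> hom C W (dom C k) \<Longrightarrow> v \<in> hom C W (dom C k) \<Longrightarrow>
    cmp C k u = h \<Longrightarrow> cmp C k v = h \<Longrightarrow> u = v"
  using kernel_universal by blast

lemma cokernel_in_hom: "is_cokernel C f c \<Longrightarrow> f \<in> hom C A B \<Longrightarrow> c \<in> hom C B (cod C c)"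
  unfolding is_cokernel_def hom_def by auto

lemma cokernel_comp_eq_zero:
  "is_cokernel C f c \<Longrightarrow> f \<in> hom C A B \<Longrightarrow> cmp C c f = zer C A (cod C c)"
  unfolding is_cokernel_def hom_def by auto

lemma cokernel_factor:
  assumes "is_cokernel C f c" and "f \<in> hom C A B" and "h \<in> hom C B W" and "cmp C h f = zer C A W"
  shows "\<exists>u \<in> hom C (cod C c) W. cmp C u c = h"
proof -
  have "h \<in> Ar C" "dom C h = B" "cod C h = W" "dom C f = A" "cod C f = B"
    using assms(2,3) unfolding hom_def by auto
  with assms(1,4) show ?thesis unfolding is_cokernel_def by metis
qed

lemma kernel_exists: "g \<in> hom C B D \<Longrightarrow> \<exists>k. is_kernel C g k"
  using abelian unfolding abelian_def hom_def by auto

lemma cokernel_exists: "g \<in> hom C B D \<Longrightarrow> \<exists>k. is_cokernel C g k"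
  using abelian unfolding abelian_def hom_def by auto

lemma mono_is_kernel: "mono C f \<Longrightarrow> \<exists>g. is_kernel C g f"
  using abelian unfolding abelian_def by auto

lemma epi_is_cokernel: "epi C f \<Longrightarrow> \<exists>g. is_cokernel C g f"
  using abelian unfolding abelian_def by auto

lemma mono_cancel: "mono C m \<Longrightarrow> m \<in> hom C X Y \<Longrightarrow> x \<in> hom C W X \<Longrightarrow> y \<in> hom C W X \<Longrightarrow>
    cmp C m x = cmp C m y \<Longrightarrow> x = y"
  unfolding mono_def hom_def by auto

lemma epi_cancel: "epi C e \<Longrightarrow> e \<in> hom C X Y \<Longrightarrow> x \<in> hom C Y W \<Longrightarrow> y \<in> hom C Y W \<Longrightarrow>
    cmp C x e = cmp C y e \<Longrightarrow> x = y"
  unfolding epi_def hom_def by auto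

lemma mono_comp_eq_zero:
  assumes m: "mono C m" and mh: "m \<in> hom C X Y" and x: "x \<in> hom C W X"
    and mx: "cmp C m x = zer C W Y"
  shows "x = zer C W X"
proof -
  have W: "W \<in> Ob C" and X: "X \<in> Ob C" using hom_objects x by blast+
  show ?thesis using mono_cancel[OF m mh x zero_in_hom[OF W X]] mx comp_zero[OF mh W] by simp
qed

lemma epi_comp_eq_zero:
  assumes e: "epi C e" and eh: "e \<in> hom C X Y" and x: "x \<in> hom C Y W"
    and xe: "cmp C x e = zer C X W"
  shows "x = zer C Y W"
proof -
  have W: "W \<in> Ob C" and Y: "Y \<in> Ob C" using hom_objects x by blast+
  show ?thesis using epi_cancel[OF e eh x zero_in_hom[OF Y W]] xe zero_comp[OF eh W] by simp
qed

lemma kernel_is_mono: assumes k: "is_kernel C g k" and g: "g \<in> hom C B D" shows "mono C k"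
  unfolding mono_def
proof (intro conjI ballI impI)
  show "k \<in> Ar C" using k unfolding is_kernel_def by auto
  fix x y assume x: "x \<in> Ar C" and y: "y \<in> Ar C"
    and c: "cod C x = dom C k \<and> cod C y = dom C k \<and> dom C x = dom C y \<and> cmp C k x = cmp C k y"
  let ?W = "dom C x"
  have kh: "k \<in> hom C (dom C k) B" by (rule kernel_in_hom[OF k g])
  have xh: "x \<in> hom C ?W (dom C k)" and yh: "y \<in> hom C ?W (dom C k)"
    using x y c by (simp_all add: hom_def)
  have D: "D \<in> Ob C" using hom_objects g by blast
  have "cmp C g (cmp C k x) = cmp C (cmp C g k) x" using comp_assoc[OF xh kh g] .
  also have "\<dots> = zer C ?W D" using comp_kernel_eq_zero[OF k g] zero_comp[OF xh D] by simp
  finally have z: "cmp C g (cmp C k x) = zer C ?W D" .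
  have kx: "cmp C k x \<in> hom C ?W B" using xh kh by blast
  show "x = y"
    by (rule kernel_factor_unique[OF k g kx z xh yh]) (use c in auto)
qed

lemma mono_comp:
  assumes mi: "mono C i" and mj: "mono C j" and j: "j \<in> hom C J I" and i: "i \<in> hom C I B"
  shows "mono C (cmp C i j)"
  unfolding mono_def
proof (intro conjI ballI impI)
  have ij: "cmp C i j \<in> hom C J B" using i j by blast
  then show "cmp C i j \<in> Ar C" by (simp add: hom_def)
  fix x y assume x: "x \<in> Ar C" and y: "y \<in> Ar C"
    and c: "cod C x = dom C (cmp C i j) \<and> cod C y = dom C (cmp C i j) \<and> dom C x = dom C y \<and>
       cmp C (cmp C i j) x = cmp C (cmp C i j) y"
  have xh: "x \<in> hom C (dom C x) J" and yh: "y \<in> hom C (dom C x) J"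
    using x y c ij by (simp_all add: hom_def)
  have "cmp C i (cmp C j x) = cmp C i (cmp C j y)"
    using c comp_assoc[OF xh j i] comp_assoc[OF yh j i] by simp
  then have "cmp C j x = cmp C j y" using mono_cancel[OF mi i] comp_in_hom xh yh j by blast
  then show "x = y" using mono_cancel[OF mj j xh yh] by blast
qed

lemma mono_comp_imp_mono:
  assumes m: "mono C (cmp C k e)" and e: "e \<in> hom C A B" and k: "k \<in> hom C B D"
  shows "mono C e"
  unfolding mono_def
proof (intro conjI ballI impI)
  show "e \<in> Ar C" using e by (simp add: hom_def)
  fix x y assume x: "x \<in> Ar C" and y: "y \<in> Ar C"
    and c: "cod C x = dom C e \<and> cod C y = dom C e \<and> dom C x = dom C y \<and> cmp C e x = cmp C e y"
  have xh: "x \<in> hom C (dom C x) A" and yh: "y \<in> hom C (dom C x) A"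
    using x y c e by (simp_all add: hom_def)
  have "cmp C (cmp C k e) x = cmp C (cmp C k e) y"
    using comp_assoc[OF xh e k] comp_assoc[OF yh e k] c by simp
  then show "x = y" using mono_cancel[OF m comp_in_hom[OF e k] xh yh] by simp
qed

lemma epiI_zero_cancel:
  assumes a: "a \<in> hom C A I"
    and z: "\<And>Z u. u \<in> hom C I Z \<Longrightarrow> cmp C u a = zer C A Z \<Longrightarrow> u = zer C I Z"
  shows "epi C a"
  unfolding epi_def
proof (intro conjI ballI impI)
  show "a \<in> Ar C" using a by (simp add: hom_def)
  fix x y assume x: "x \<in> Ar C" and y: "y \<in> Ar C"
    and c: "dom C x = cod C a \<and> dom C y = cod C a \<and> cod C x = cod C y \<and> cmp C x a = cmp C y a"
  let ?Z = "cod C x"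
  have xh: "x \<in> hom C I ?Z" and yh: "y \<in> hom C I ?Z" using x y c a by (simp_all add: hom_def)
  have "cmp C (add C x (ngt C y)) a = add C (cmp C x a) (ngt C (cmp C y a))"
    using add_comp[OF a xh neg_in_hom[OF yh]] neg_comp[OF a yh] by simp
  also have "\<dots> = zer C A ?Z" using c add_neg[OF comp_in_hom[OF a yh]] by simp
  finally have "add C x (ngt C y) = zer C I ?Z" using z add_in_hom[OF xh neg_in_hom[OF yh]] by blast
  then show "x = y" using eq_if_add_neg_eq_zero[OF xh yh] by blast
qed

text \<open>In the next two lemmas \<open>i = ker (coker f)\<close> is the image of \<open>f\<close>.\<close>

lemma image_factor_through_mono:
  assumes f: "f \<in> hom C A B" and c: "is_cokernel C f c" and i: "is_kernel C c i"
    and m: "mono C m" and mh: "m \<in> hom C J B" and a: "a \<in> hom C A J" and ma: "cmp C m a = f"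
  shows "\<exists>w \<in> hom C (dom C i) J. cmp C m w = i"
proof -
  have ch: "c \<in> hom C B (cod C c)" by (rule cokernel_in_hom[OF c f])
  have ih: "i \<in> hom C (dom C i) B" by (rule kernel_in_hom[OF i ch])
  obtain h where h: "is_kernel C h m" using mono_is_kernel m by blast
  then have hh: "h \<in> hom C B (cod C h)" using mh unfolding is_kernel_def hom_def by auto
  have H: "cod C h \<in> Ob C" and I: "dom C i \<in> Ob C" using hom_objects hh ih by blast+
  have "cmp C h f = cmp C (cmp C h m) a" using comp_assoc[OF a mh hh] ma by simp
  also have "\<dots> = zer C A (cod C h)"
    using comp_kernel_eq_zero[OF h hh] homD[OF mh] zero_comp[OF a H] by simp
  finally obtain t where t: "t \<in> hom C (cod C c) (cod C h)" "cmp C t c = h"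
    using cokernel_factor[OF c f hh] by blast
  have "cmp C h i = cmp C t (cmp C c i)" using comp_assoc[OF ih ch t(1)] t(2) by simp
  also have "\<dots> = zer C (dom C i) (cod C h)"
    using comp_kernel_eq_zero[OF i ch] comp_zero[OF t(1) I] by simp
  finally show ?thesis using kernel_factor[OF h hh ih] homD[OF mh] by auto
qed

lemma image_factor_epi:
  assumes f: "f \<in> hom C A B" and c: "is_cokernel C f c" and i: "is_kernel C c i"
    and a: "a \<in> hom C A (dom C i)" and ia: "cmp C i a = f"
  shows "epi C a"
proof (rule epiI_zero_cancel[OF a])
  let ?I = "dom C i"
  have ch: "c \<in> hom C B (cod C c)" by (rule cokernel_in_hom[OF c f])
  have ih: "i \<in> hom C ?I B" by (rule kernel_in_hom[OF i ch])
  have im: "mono C i" by (rule kernel_is_mono[OF i ch])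
  have I: "?I \<in> Ob C" using hom_objects ih by blast
  fix Z u assume u: "u \<in> hom C ?I Z" and ua: "cmp C u a = zer C A Z"
  obtain j where j: "is_kernel C u j" using kernel_exists u by blast
  have jh: "j \<in> hom C (dom C j) ?I" by (rule kernel_in_hom[OF j u])
  obtain a' where a': "a' \<in> hom C A (dom C j)" "cmp C j a' = a" using kernel_factor[OF j u a ua] by blast
  have "cmp C (cmp C i j) a' = f" using comp_assoc[OF a'(1) jh ih] a'(2) ia by simp
  then obtain w where w: "w \<in> hom C ?I (dom C j)" "cmp C (cmp C i j) w = i"
    using image_factor_through_mono[OF f c i mono_comp[OF im kernel_is_mono[OF j u] jh ih]]
      comp_in_hom[OF jh ih] a'(1) by blast
  have "cmp C i (cmp C j w) = cmp C i (idm C ?I)"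
    using w(2) comp_assoc[OF w(1) jh ih] comp_id[OF ih] by simp
  then have jw: "cmp C j w = idm C ?I"
    using mono_cancel[OF im ih comp_in_hom[OF w(1) jh] id_in_hom[OF I]] by blast
  have "u = cmp C (cmp C u j) w" using comp_assoc[OF w(1) jh u] jw comp_id[OF u] by simp
  also have "\<dots> = zer C ?I Z" using comp_kernel_eq_zero[OF j u] zero_comp[OF w(1)] hom_objects[OF u] by simp
  finally show "u = zer C ?I Z" .
qed

text \<open>If \<open>f\<close> and \<open>g\<close> are exact, \<open>f\<close> maps epimorphically onto \<open>ker g\<close>: both \<open>ker g\<close> and the
  image \<open>ker (coker f)\<close> factor through each other, and \<open>f\<close> is epi onto its image.\<close>

lemma exact_kernel_factor_epi:
  assumes ex: "exact_at C f g" and f: "f \<in> hom C A B" and g: "g \<in> hom C B D"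
    and k: "is_kernel C g k" and e: "e \<in> hom C A (dom C k)" and ke: "cmp C k e = f"
  shows "epi C e"
proof -
  let ?K = "dom C k"
  obtain c where c: "is_cokernel C f c" using cokernel_exists f by blast
  have ch: "c \<in> hom C B (cod C c)" by (rule cokernel_in_hom[OF c f])
  obtain i where i: "is_kernel C c i" using kernel_exists ch by blast
  have ih: "i \<in> hom C (dom C i) B" by (rule kernel_in_hom[OF i ch])
  have kh: "k \<in> hom C ?K B" by (rule kernel_in_hom[OF k g])
  have km: "mono C k" by (rule kernel_is_mono[OF k g])
  have K: "?K \<in> Ob C" using hom_objects kh by blast
  have "cmp C c k = zer C ?K (cod C c)" using ex k c unfolding exact_at_def by blast
  then obtain z where z: "z \<in> hom C ?K (dom C i)" "cmp C i z = k"
    using kernel_factor[OF i ch kh] by blast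
  obtain a where a: "a \<in> hom C A (dom C i)" "cmp C i a = f"
    using kernel_factor[OF i ch f cokernel_comp_eq_zero[OF c f]] by blast
  have ae: "epi C a" by (rule image_factor_epi[OF f c i a])
  have "cmp C (cmp C g i) a = zer C A D"
    using comp_assoc[OF a(1) ih g] a(2) ex homD[OF f] homD[OF g] unfolding exact_at_def by simp
  then obtain w where w: "w \<in> hom C (dom C i) ?K" "cmp C k w = i"
    using kernel_factor[OF k g ih] epi_comp_eq_zero[OF ae a(1) comp_in_hom[OF ih g]] by blast
  have "cmp C k (cmp C w z) = cmp C k (idm C ?K)"
    using comp_assoc[OF z(1) w(1) kh] w(2) z(2) comp_id[OF kh] by simp
  then have wz: "cmp C w z = idm C ?K"
    using mono_cancel[OF km kh comp_in_hom[OF z(1) w(1)] id_in_hom[OF K]] by blast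
  have "cmp C k (cmp C w a) = cmp C k e" using comp_assoc[OF a(1) w(1) kh] w(2) a(2) ke by simp
  then have wa: "cmp C w a = e" using mono_cancel[OF km kh comp_in_hom[OF a(1) w(1)] e] by blast
  show ?thesis
  proof (rule epiI_zero_cancel[OF e])
    fix Z u assume u: "u \<in> hom C ?K Z" and ue: "cmp C u e = zer C A Z"
    have "cmp C (cmp C u w) a = zer C A Z" using comp_assoc[OF a(1) w(1) u] wa ue by simp
    then have uw: "cmp C u w = zer C (dom C i) Z"
      using epi_comp_eq_zero[OF ae a(1) comp_in_hom[OF w(1) u]] by blast
    have "u = cmp C (cmp C u w) z" using comp_assoc[OF z(1) w(1) u] wz comp_id[OF u] by simp
    then show "u = zer C ?K Z" using uw zero_comp[OF z(1)] hom_objects[OF u] by simp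
  qed
qed

lemma factor_through_epi:
  assumes qe: "epi C q" and q: "q \<in> hom C A B" and i: "is_kernel C q \<iota>"
    and g: "g \<in> hom C A Z" and gi: "cmp C g \<iota> = zer C (dom C \<iota>) Z"
  shows "\<exists>s \<in> hom C B Z. cmp C s q = g"
proof -
  obtain w where w: "is_cokernel C w q" using epi_is_cokernel qe by blast
  have "w \<in> Ar C" "cod C w = dom C q" using w unfolding is_cokernel_def by auto
  then have wh: "w \<in> hom C (dom C w) A" using homD[OF q] by (simp add: hom_def)
  have qw: "cmp C q w = zer C (dom C w) B" using cokernel_comp_eq_zero[OF w wh] homD[OF q] by simp
  obtain u where u: "u \<in> hom C (dom C w) (dom C \<iota>)" "cmp C \<iota> u = w"
    using kernel_factor[OF i q wh qw] by blast
  have ih: "\<iota> \<in> hom C (dom C \<iota>) A" by (rule kernel_in_hom[OF i q])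
  have "cmp C g w = cmp C (cmp C g \<iota>) u" using comp_assoc[OF u(1) ih g] u(2) by simp
  also have "\<dots> = zer C (dom C w) Z" using gi zero_comp[OF u(1)] hom_objects[OF g] by simp
  finally have gw: "cmp C g w = zer C (dom C w) Z" .
  obtain s where s: "s \<in> hom C (cod C q) Z" "cmp C s q = g" using cokernel_factor[OF w wh g gw] by blast
  then show ?thesis using homD[OF q] by auto
qed

lemma kernel_comp_mono:
  assumes x: "is_kernel C b x" and b: "b \<in> hom C A B" and k: "k \<in> hom C B D" and m: "mono C k"
  shows "is_kernel C (cmp C k b) x"
proof -
  have kb: "cmp C k b \<in> hom C A D" using b k by blast
  have xh: "x \<in> hom C (dom C x) A" by (rule kernel_in_hom[OF x b])
  have bx: "cmp C b x = zer C (dom C x) B" by (rule comp_kernel_eq_zero[OF x b])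
  have X: "dom C x \<in> Ob C" using hom_objects xh by blast
  have z1: "cmp C (cmp C k b) x = zer C (dom C x) D"
    using comp_assoc[OF xh b k] bx comp_zero[OF k X] by simp
  have eqv: "\<And>h W. h \<in> hom C W A \<Longrightarrow> (cmp C (cmp C k b) h = zer C W D) = (cmp C b h = zer C W B)"
  proof -
    fix h W assume h: "h \<in> hom C W A"
    have W: "W \<in> Ob C" using hom_objects h by blast
    have e1: "cmp C (cmp C k b) h = cmp C k (cmp C b h)" using comp_assoc[OF h b k] by simp
    have e2: "cmp C k (zer C W B) = zer C W D" using comp_zero[OF k W] .
    show "(cmp C (cmp C k b) h = zer C W D) = (cmp C b h = zer C W B)"
      using mono_comp_eq_zero[OF m k comp_in_hom[OF h b]] e1 e2 by auto
  qed
  show ?thesis unfolding is_kernel_def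
  proof (intro conjI ballI impI)
    show "cmp C k b \<in> Ar C" "x \<in> Ar C" using kb xh by (auto simp: hom_def)
    show "cod C x = dom C (cmp C k b)" using kb xh by (auto simp: hom_def)
    show "cmp C (cmp C k b) x = zer C (dom C x) (cod C (cmp C k b))" using z1 kb by (simp add: hom_def)
    fix h assume h: "h \<in> Ar C" and hc: "cod C h = dom C (cmp C k b) \<and>
        cmp C (cmp C k b) h = zer C (dom C h) (cod C (cmp C k b))"
    have hh: "h \<in> hom C (dom C h) A" using h hc kb by (simp add: hom_def)
    have "cmp C b h = zer C (dom C h) B" using eqv[OF hh] hc kb by (simp add: hom_def)
    then show "\<exists>!u. u \<in> hom C (dom C h) (dom C x) \<and> cmp C x u = h"
      using kernel_universal[OF x b hh] by blast
  qed
qed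

lemma exact_at_cancel_mono:
  assumes ex: "exact_at C a (cmp C k b)" and a: "a \<in> hom C A0 A" and b: "b \<in> hom C A B"
    and k: "k \<in> hom C B D" and m: "mono C k"
  shows "exact_at C a b"
proof -
  have A0: "A0 \<in> Ob C" using hom_objects a by blast
  have kb: "cmp C k b \<in> hom C A D" using b k by blast
  have "cmp C (cmp C k b) a = zer C (dom C a) (cod C (cmp C k b))" using ex unfolding exact_at_def by blast
  then have "cmp C (cmp C k b) a = zer C A0 D" using homD[OF a] homD[OF kb] by simp
  then have "cmp C k (cmp C b a) = zer C A0 D" using comp_assoc[OF a b k] by simp
  then have ba: "cmp C b a = zer C A0 B" using mono_comp_eq_zero[OF m k comp_in_hom[OF a b]] by simp
  show ?thesis unfolding exact_at_def
  proof (intro conjI allI impI)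
    show "a \<in> Ar C" "b \<in> Ar C" "cod C a = dom C b" using a b by (auto simp: hom_def)
    show "cmp C b a = zer C (dom C a) (cod C b)" using ba a b by (simp add: hom_def)
    fix k' c assume kc: "is_kernel C b k' \<and> is_cokernel C a c"
    then have "is_kernel C (cmp C k b) k'" using kernel_comp_mono b k m by blast
    then show "cmp C c k' = zer C (dom C k') (cod C c)" using ex kc unfolding exact_at_def by blast
  qed
qed

lemma projective_lift: "projective C P \<Longrightarrow> epi C e \<Longrightarrow> e \<in> hom C A B \<Longrightarrow> f \<in> hom C P B \<Longrightarrow>
  \<exists>g \<in> hom C P A. cmp C e g = f"
  unfolding projective_def hom_def by auto

lemma injective_extend: "injective C I \<Longrightarrow> mono C m \<Longrightarrow> m \<in> hom C A B \<Longrightarrow> f \<in> hom C A I \<Longrightarrow>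
  \<exists>g \<in> hom C B I. cmp C g m = f"
  unfolding injective_def hom_def by auto


lemma proj_resolution_syzygy:
  assumes R: "proj_resolution C Y (Suc n) Q dd" and \<iota>: "is_kernel C (dd 0) \<iota>"
  shows "\<exists>Q' d'. proj_resolution C (dom C \<iota>) n Q' d'"
proof -
  have d0: "dd 0 \<in> hom C (Q 0) Y" and d1: "dd 1 \<in> hom C (Q 1) (Q 0)"
    and Rm: "mono C (dd (Suc n))" and ex0: "exact_at C (dd 1) (dd 0)"
    using R unfolding proj_resolution_def by auto
  have \<iota>h: "\<iota> \<in> hom C (dom C \<iota>) (Q 0)" by (rule kernel_in_hom[OF \<iota> d0])
  have "cmp C (dd 0) (dd 1) = zer C (Q 1) Y"
    using ex0 homD[OF d1] homD[OF d0] unfolding exact_at_def by simp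
  then obtain a where a: "a \<in> hom C (Q 1) (dom C \<iota>)" and \<iota>a: "cmp C \<iota> a = dd 1"
    using kernel_factor[OF \<iota> d0 d1] by blast
  have "epi C a" by (rule exact_kernel_factor_epi[OF ex0 d1 d0 \<iota> a \<iota>a])
  moreover have "mono C a" if "n = 0"
    using mono_comp_imp_mono[OF _ a \<iota>h] Rm \<iota>a that by simp
  moreover have "exact_at C (dd (Suc (Suc 0))) a" if "0 < n"
  proof (rule exact_at_cancel_mono[OF _ _ a \<iota>h kernel_is_mono[OF \<iota> d0]])
    show "exact_at C (dd (Suc (Suc 0))) (cmp C \<iota> a)"
      using R that \<iota>a unfolding proj_resolution_def by simp
    show "dd (Suc (Suc 0)) \<in> hom C (Q (Suc (Suc 0))) (Q 1)"
      using R that unfolding proj_resolution_def by simp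
  qed
  ultimately have "proj_resolution C (dom C \<iota>) n (\<lambda>i. Q (Suc i)) (\<lambda>i. if i = 0 then a else dd (Suc i))"
    using R a unfolding proj_resolution_def by (auto simp: less_Suc_eq_0_disj)
  then show ?thesis by blast
qed

end

text \<open>An exact sequence \<open>J 0 --e 1--> J 1 --> \<dots> --> J k --p--> Z --> 0\<close> of injectives,
  exactness being required everywhere except at \<open>J 0\<close>.\<close>

definition inj_complex_onto ::
    "('o, 'm) cat \<Rightarrow> nat \<Rightarrow> (nat \<Rightarrow> 'o) \<Rightarrow> (nat \<Rightarrow> 'm) \<Rightarrow> 'm \<Rightarrow> 'o \<Rightarrow> bool" where
  "inj_complex_onto C k J e p Z \<longleftrightarrow>
     (\<forall>i \<le> k. injective C (J i)) \<and>
     (\<forall>i < k. e (Suc i) \<in> hom C (J i) (J (Suc i))) \<and>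
     (\<forall>i. 1 \<le> i \<and> i < k \<longrightarrow> exact_at C (e i) (e (Suc i))) \<and>
     p \<in> hom C (J k) Z \<and> epi C p \<and> (1 \<le> k \<longrightarrow> exact_at C (e k) p)"

context abelian_category begin

lemma inj_complex_onto_kernel:
  assumes J: "inj_complex_onto C (Suc k) J e p Z"
    and \<kappa>: "is_kernel C p \<kappa>"
  shows "\<exists>p'. cmp C \<kappa> p' = e (Suc k) \<and> inj_complex_onto C k J e p' (dom C \<kappa>)"
proof -
  have p: "p \<in> hom C (J (Suc k)) Z" and ek: "e (Suc k) \<in> hom C (J k) (J (Suc k))"
    and exk: "exact_at C (e (Suc k)) p"
    using J unfolding inj_complex_onto_def by auto
  have \<kappa>h: "\<kappa> \<in> hom C (dom C \<kappa>) (J (Suc k))" by (rule kernel_in_hom[OF \<kappa> p])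
  have "cmp C p (e (Suc k)) = zer C (J k) Z"
    using exk homD[OF ek] homD[OF p] unfolding exact_at_def by simp
  then obtain p' where p': "p' \<in> hom C (J k) (dom C \<kappa>)" "cmp C \<kappa> p' = e (Suc k)"
    using kernel_factor[OF \<kappa> p ek] by blast
  have "epi C p'" by (rule exact_kernel_factor_epi[OF exk ek p \<kappa> p'])
  moreover have "exact_at C (e k) p'" if "1 \<le> k"
  proof -
    obtain k0 where k0: "k = Suc k0" using \<open>1 \<le> k\<close> by (cases k) auto
    have "e k \<in> hom C (J k0) (J k)" and "exact_at C (e k) (cmp C \<kappa> p')"
      using J p'(2) \<open>1 \<le> k\<close> k0 unfolding inj_complex_onto_def by auto
    then show ?thesis
      using exact_at_cancel_mono p'(1) \<kappa>h kernel_is_mono[OF \<kappa> p] by blast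
  qed
  ultimately have "inj_complex_onto C k J e p' (dom C \<kappa>)"
    using J p'(1) unfolding inj_complex_onto_def by auto
  with p'(2) show ?thesis by blast
qed

text \<open>The difference \<open>f - h\<close> vanishes on the kernel of \<open>q\<close>, so it descends along the epi
  \<open>q\<close> to the required lift.\<close>

lemma lift_through_epi_by_correction:
  assumes q: "q \<in> hom C Q Y" and qe: "epi C q" and \<iota>: "is_kernel C q \<iota>"
    and p: "p \<in> hom C J Z" and \<psi>: "\<psi> \<in> hom C Y Z"
    and f: "f \<in> hom C Q J" and pf: "cmp C p f = cmp C \<psi> q"
    and h: "h \<in> hom C Q J" and ph: "cmp C p h = zer C Q Z" and h\<iota>: "cmp C h \<iota> = cmp C f \<iota>"
  shows "\<exists>s \<in> hom C Y J. cmp C p s = \<psi>"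
proof -
  have \<iota>h: "\<iota> \<in> hom C (dom C \<iota>) Q" by (rule kernel_in_hom[OF \<iota> q])
  define g where "g = add C f (ngt C h)"
  have g: "g \<in> hom C Q J" unfolding g_def using add_in_hom[OF f neg_in_hom[OF h]] .
  have "cmp C g \<iota> = add C (cmp C f \<iota>) (ngt C (cmp C f \<iota>))"
    unfolding g_def using add_comp[OF \<iota>h f neg_in_hom[OF h]] neg_comp[OF \<iota>h h] h\<iota> by simp
  then have "cmp C g \<iota> = zer C (dom C \<iota>) J" using add_neg[OF comp_in_hom[OF \<iota>h f]] by simp
  then obtain s where s: "s \<in> hom C Y J" "cmp C s q = g"
    using factor_through_epi[OF qe q \<iota> g] by blast
  have Q: "Q \<in> Ob C" and Z: "Z \<in> Ob C" using hom_objects q p by blast+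
  have "cmp C (cmp C p s) q = cmp C p g" using comp_assoc[OF q s(1) p] s(2) by simp
  also have "\<dots> = add C (cmp C p f) (ngt C (cmp C p h))"
    unfolding g_def using comp_add[OF f neg_in_hom[OF h] p] comp_neg[OF h p] by simp
  also have "\<dots> = cmp C \<psi> q"
    using pf ph neg_zero[OF Q Z] add_zero[OF comp_in_hom[OF q \<psi>]] by simp
  finally have "cmp C p s = \<psi>" using epi_cancel[OF qe q comp_in_hom[OF s(1) p] \<psi>] by blast
  with s(1) show ?thesis by blast
qed

lemma proj_resolution_0_lift:
  assumes R: "proj_resolution C Y 0 Q dd" and p: "p \<in> hom C J Z" and pe: "epi C p"
    and \<psi>: "\<psi> \<in> hom C Y Z"
  shows "\<exists>s \<in> hom C Y J. cmp C p s = \<psi>"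
proof -
  have Q0: "projective C (Q 0)" and d0: "dd 0 \<in> hom C (Q 0) Y"
    and d0e: "epi C (dd 0)" and d0m: "mono C (dd 0)"
    using R unfolding proj_resolution_def by auto
  obtain f where f: "f \<in> hom C (Q 0) J" "cmp C p f = cmp C \<psi> (dd 0)"
    using projective_lift[OF Q0 pe p comp_in_hom[OF d0 \<psi>]] by blast
  obtain \<iota> where \<iota>: "is_kernel C (dd 0) \<iota>" using kernel_exists d0 by blast
  have \<iota>h: "\<iota> \<in> hom C (dom C \<iota>) (Q 0)" by (rule kernel_in_hom[OF \<iota> d0])
  have K: "dom C \<iota> \<in> Ob C" and Q0o: "Q 0 \<in> Ob C" and Jo: "J \<in> Ob C"
    using hom_objects \<iota>h f(1) by blast+
  have \<iota>0: "\<iota> = zer C (dom C \<iota>) (Q 0)"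
    by (rule mono_comp_eq_zero[OF d0m d0 \<iota>h comp_kernel_eq_zero[OF \<iota> d0]])
  show ?thesis
  proof (rule lift_through_epi_by_correction[OF d0 d0e \<iota> p \<psi> f])
    show "zer C (Q 0) J \<in> hom C (Q 0) J" by (rule zero_in_hom[OF Q0o Jo])
    show "cmp C p (zer C (Q 0) J) = zer C (Q 0) Z" by (rule comp_zero[OF p Q0o])
    show "cmp C (zer C (Q 0) J) \<iota> = cmp C f \<iota>"
      using \<iota>0 comp_zero[OF f(1) K] zero_comp[OF \<iota>h Jo] by simp
  qed
qed

text \<open>Dimension shifting: the obstruction to the lift lives in \<open>Ext\<^sup>k\<^sup>+\<^sup>1(Y, -)\<close>, which vanishes
  once \<open>k\<close> reaches the length of a projective resolution of \<open>Y\<close>. Passing to the first syzygy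
  of \<open>Y\<close> and to the kernel of \<open>p\<close> lowers both lengths by one.\<close>

lemma lift_through_inj_complex:
  "proj_resolution C Y n Q dd \<Longrightarrow> n \<le> k \<Longrightarrow> inj_complex_onto C k J e p Z \<Longrightarrow>
    \<psi> \<in> hom C Y Z \<Longrightarrow> \<exists>s \<in> hom C Y (J k). cmp C p s = \<psi>"
proof (induction n arbitrary: Y Q dd k Z p \<psi>)
  case 0
  show ?case
    by (rule proj_resolution_0_lift[OF "0.prems"(1) _ _ "0.prems"(4)])
      (use "0.prems"(3) in \<open>simp_all add: inj_complex_onto_def\<close>)
next
  case (Suc n Y Q dd k Z p \<psi>)
  obtain k0 where k0: "k = Suc k0" using Suc.prems(2) by (cases k) auto
  have Q0: "projective C (Q 0)" and d0: "dd 0 \<in> hom C (Q 0) Y" and d0e: "epi C (dd 0)"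
    using Suc.prems(1) unfolding proj_resolution_def by auto
  have p: "p \<in> hom C (J k) Z" and pe: "epi C p" and ek: "e k \<in> hom C (J k0) (J k)"
    and Jk0: "injective C (J k0)" and exk: "exact_at C (e k) p"
    using Suc.prems(3) k0 unfolding inj_complex_onto_def by auto
  have \<psi>: "\<psi> \<in> hom C Y Z" by (rule Suc.prems(4))
  obtain f where f: "f \<in> hom C (Q 0) (J k)" "cmp C p f = cmp C \<psi> (dd 0)"
    using projective_lift[OF Q0 pe p comp_in_hom[OF d0 \<psi>]] by blast
  obtain \<iota> where \<iota>: "is_kernel C (dd 0) \<iota>" using kernel_exists d0 by blast
  have \<iota>h: "\<iota> \<in> hom C (dom C \<iota>) (Q 0)" by (rule kernel_in_hom[OF \<iota> d0])
  obtain \<kappa> where \<kappa>: "is_kernel C p \<kappa>" using kernel_exists p by blast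
  have \<kappa>h: "\<kappa> \<in> hom C (dom C \<kappa>) (J k)" by (rule kernel_in_hom[OF \<kappa> p])
  have "cmp C p (cmp C f \<iota>) = cmp C \<psi> (cmp C (dd 0) \<iota>)"
    using comp_assoc[OF \<iota>h f(1) p] comp_assoc[OF \<iota>h d0 \<psi>] f(2) by simp
  also have "\<dots> = zer C (dom C \<iota>) Z"
    using comp_kernel_eq_zero[OF \<iota> d0] comp_zero[OF \<psi>] hom_objects[OF \<iota>h] by simp
  finally obtain \<phi> where \<phi>: "\<phi> \<in> hom C (dom C \<iota>) (dom C \<kappa>)" "cmp C \<kappa> \<phi> = cmp C f \<iota>"
    using kernel_factor[OF \<kappa> p comp_in_hom[OF \<iota>h f(1)]] by blast
  obtain p' where p': "cmp C \<kappa> p' = e k" and J': "inj_complex_onto C k0 J e p' (dom C \<kappa>)"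
    using inj_complex_onto_kernel[OF Suc.prems(3)[unfolded k0] \<kappa>] k0 by blast
  have p'h: "p' \<in> hom C (J k0) (dom C \<kappa>)" using J' unfolding inj_complex_onto_def by blast
  obtain Q' d' where "proj_resolution C (dom C \<iota>) n Q' d'"
    using proj_resolution_syzygy[OF Suc.prems(1) \<iota>] by blast
  then obtain \<phi>' where \<phi>': "\<phi>' \<in> hom C (dom C \<iota>) (J k0)" "cmp C p' \<phi>' = \<phi>"
    using Suc.IH[OF _ _ J' \<phi>(1)] Suc.prems(2) k0 by auto
  obtain \<phi>'' where \<phi>'': "\<phi>'' \<in> hom C (Q 0) (J k0)" "cmp C \<phi>'' \<iota> = \<phi>'"
    using injective_extend[OF Jk0 kernel_is_mono[OF \<iota> d0] \<iota>h \<phi>'(1)] by blast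
  show ?case
  proof (rule lift_through_epi_by_correction[OF d0 d0e \<iota> p \<psi> f])
    show "cmp C (e k) \<phi>'' \<in> hom C (Q 0) (J k)" using \<phi>''(1) ek by blast
    have "cmp C p (e k) = zer C (J k0) Z"
      using exk homD[OF ek] homD[OF p] unfolding exact_at_def by simp
    then show "cmp C p (cmp C (e k) \<phi>'') = zer C (Q 0) Z"
      using comp_assoc[OF \<phi>''(1) ek p] zero_comp[OF \<phi>''(1)] hom_objects[OF p] by simp
    have "cmp C (cmp C (e k) \<phi>'') \<iota> = cmp C (e k) \<phi>'"
      using comp_assoc[OF \<iota>h \<phi>''(1) ek] \<phi>''(2) by simp
    also have "\<dots> = cmp C \<kappa> \<phi>" using p' comp_assoc[OF \<phi>'(1) p'h \<kappa>h] \<phi>'(2) by simp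
    finally show "cmp C (cmp C (e k) \<phi>'') \<iota> = cmp C f \<iota>" using \<phi>(2) by simp
  qed
qed


lemma injective_retract:
  assumes I: "injective C I" and m: "m \<in> hom C K I" and r: "r \<in> hom C I K"
    and rm: "cmp C r m = idm C K"
  shows "injective C K"
  unfolding injective_def
proof (intro conjI allI impI)
  show "K \<in> Ob C" using hom_objects m by blast
  fix \<mu> \<phi> assume a: "mono C \<mu> \<and> \<phi> \<in> hom C (dom C \<mu>) K"
  have \<mu>: "\<mu> \<in> hom C (dom C \<mu>) (cod C \<mu>)" using a unfolding mono_def hom_def by auto
  have \<phi>: "\<phi> \<in> hom C (dom C \<mu>) K" using a by blast
  obtain \<chi> where \<chi>: "\<chi> \<in> hom C (cod C \<mu>) I" "cmp C \<chi> \<mu> = cmp C m \<phi>"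
    using injective_extend[OF I _ \<mu> comp_in_hom[OF \<phi> m]] a by blast
  have "cmp C (cmp C r \<chi>) \<mu> = cmp C (cmp C r m) \<phi>"
    using comp_assoc[OF \<mu> \<chi>(1) r] comp_assoc[OF \<phi> m r] \<chi>(2) by simp
  also have "\<dots> = \<phi>" using rm id_comp[OF \<phi>] by simp
  finally show "\<exists>g \<in> hom C (cod C \<mu>) K. cmp C g \<mu> = \<phi>" using comp_in_hom[OF \<chi>(1) r] by blast
qed

lemma kernel_of_split_epi_has_retraction:
  assumes d: "d \<in> hom C A B" and s: "s \<in> hom C B A" and ds: "cmp C d s = idm C B"
    and \<kappa>: "is_kernel C d \<kappa>"
  shows "\<exists>r \<in> hom C A (dom C \<kappa>). cmp C r \<kappa> = idm C (dom C \<kappa>)"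
proof -
  let ?K = "dom C \<kappa>"
  have \<kappa>h: "\<kappa> \<in> hom C ?K A" by (rule kernel_in_hom[OF \<kappa> d])
  have A: "A \<in> Ob C" and K: "?K \<in> Ob C" using hom_objects d \<kappa>h by blast+
  have sd: "cmp C s d \<in> hom C A A" using s d by blast
  define u where "u = add C (idm C A) (ngt C (cmp C s d))"
  have u: "u \<in> hom C A A" unfolding u_def using add_in_hom[OF id_in_hom[OF A] neg_in_hom[OF sd]] .
  have "cmp C d (cmp C s d) = d" using comp_assoc[OF d s d] ds id_comp[OF d] by simp
  then have "cmp C d u = add C d (ngt C d)"
    unfolding u_def using comp_add[OF id_in_hom[OF A] neg_in_hom[OF sd] d] comp_neg[OF sd d]
      comp_id[OF d] by simp
  then have "cmp C d u = zer C A B" using add_neg[OF d] by simp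
  then obtain r where r: "r \<in> hom C A ?K" "cmp C \<kappa> r = u" using kernel_factor[OF \<kappa> d u] by blast
  have "cmp C (cmp C s d) \<kappa> = zer C ?K A"
    using comp_assoc[OF \<kappa>h d s] comp_kernel_eq_zero[OF \<kappa> d] comp_zero[OF s K] by simp
  then have "cmp C u \<kappa> = \<kappa>"
    unfolding u_def using add_comp[OF \<kappa>h id_in_hom[OF A] neg_in_hom[OF sd]] neg_comp[OF \<kappa>h sd]
      id_comp[OF \<kappa>h] neg_zero[OF K A] add_zero[OF \<kappa>h] by simp
  then have "cmp C \<kappa> (cmp C r \<kappa>) = cmp C \<kappa> (idm C ?K)"
    using comp_assoc[OF \<kappa>h r(1) \<kappa>h] r(2) comp_id[OF \<kappa>h] by simp
  then have "cmp C r \<kappa> = idm C ?K"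
    using mono_cancel[OF kernel_is_mono[OF \<kappa> d] \<kappa>h comp_in_hom[OF \<kappa>h r(1)] id_in_hom[OF K]]
    by blast
  with r(1) show ?thesis by blast
qed

lemma inj_resolution_in_hom:
  assumes "inj_resolution C X m I d" and "i \<le> m"
  shows "d i \<in> hom C (if i = 0 then X else I (i - 1)) (I i)"
  using assms unfolding inj_resolution_def by (cases i) auto

lemma inj_resolution_truncate:
  assumes R: "inj_resolution C X (Suc m) I d"
    and \<kappa>: "is_kernel C (d (Suc m)) \<kappa>" and K: "injective C (dom C \<kappa>)"
  shows "\<exists>I' d'. inj_resolution C X m I' d'"
proof -
  have Ri: "\<And>i. i \<le> Suc m \<Longrightarrow> injective C (I i)"
    and Rs: "\<And>i. i < Suc m \<Longrightarrow> d (Suc i) \<in> hom C (I i) (I (Suc i))"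
    and Rm: "mono C (d 0)" and Rx: "\<And>i. i < Suc m \<Longrightarrow> exact_at C (d i) (d (Suc i))"
    using R unfolding inj_resolution_def by auto
  let ?A = "if m = 0 then X else I (m - 1)" and ?K = "dom C \<kappa>"
  have dm: "d m \<in> hom C ?A (I m)" using inj_resolution_in_hom[OF R] by simp
  have dSm: "d (Suc m) \<in> hom C (I m) (I (Suc m))" using Rs by simp
  have \<kappa>h: "\<kappa> \<in> hom C ?K (I m)" by (rule kernel_in_hom[OF \<kappa> dSm])
  have \<kappa>m: "mono C \<kappa>" by (rule kernel_is_mono[OF \<kappa> dSm])
  have exm: "exact_at C (d m) (d (Suc m))" using Rx by simp
  then have "cmp C (d (Suc m)) (d m) = zer C ?A (I (Suc m))"
    using homD[OF dm] homD[OF dSm] unfolding exact_at_def by simp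
  then obtain e where e: "e \<in> hom C ?A ?K" "cmp C \<kappa> e = d m"
    using kernel_factor[OF \<kappa> dSm dm] by blast
  have "epi C e" by (rule exact_kernel_factor_epi[OF exm dm dSm \<kappa> e])
  moreover have "mono C e" if "m = 0"
    using mono_comp_imp_mono[of \<kappa> e] e Rm \<kappa>h that by simp
  moreover have "exact_at C (d i) e" if "Suc i = m" for i
  proof -
    have "d i \<in> hom C (if i = 0 then X else I (i - 1)) (I i)"
      using inj_resolution_in_hom[OF R] that by simp
    moreover have "e \<in> hom C (I i) ?K" "exact_at C (d i) (cmp C \<kappa> e)"
      using e Rx[of i] that by auto
    ultimately show ?thesis using exact_at_cancel_mono \<kappa>h \<kappa>m by blast
  qed
  ultimately have "inj_resolution C X m (I(m := ?K)) (d(m := e))"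
    using R K e(1) Rs Rx unfolding inj_resolution_def by auto
  then show ?thesis by blast
qed

lemma inj_resolution_complex_onto:
  "inj_resolution C X (Suc m) I d \<Longrightarrow> inj_complex_onto C m I d (d (Suc m)) (I (Suc m))"
  unfolding inj_resolution_def inj_complex_onto_def by simp

lemma inj_resolution_shorten:
  assumes R: "inj_resolution C X (Suc m) I d"
    and P: "proj_resolution C (I (Suc m)) n Q dd" and nm: "n \<le> m"
  shows "\<exists>I' d'. inj_resolution C X m I' d'"
proof -
  have dSm: "d (Suc m) \<in> hom C (I m) (I (Suc m))" and Im: "injective C (I m)"
    using R unfolding inj_resolution_def by auto
  have ISm: "I (Suc m) \<in> Ob C" using hom_objects dSm by blast
  obtain s where s: "s \<in> hom C (I (Suc m)) (I m)" "cmp C (d (Suc m)) s = idm C (I (Suc m))"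
    using lift_through_inj_complex[OF P nm inj_resolution_complex_onto[OF R] id_in_hom[OF ISm]]
    by blast
  obtain \<kappa> where \<kappa>: "is_kernel C (d (Suc m)) \<kappa>" using kernel_exists dSm by blast
  obtain r where "r \<in> hom C (I m) (dom C \<kappa>)" "cmp C r \<kappa> = idm C (dom C \<kappa>)"
    using kernel_of_split_epi_has_retraction[OF dSm s \<kappa>] by blast
  then have "injective C (dom C \<kappa>)"
    using injective_retract[OF Im kernel_in_hom[OF \<kappa> dSm]] by blast
  then show ?thesis by (rule inj_resolution_truncate[OF R \<kappa>])
qed


lemma finite_inj_dim_le:
  assumes pd: "\<And>I. injective C I \<Longrightarrow> proj_dim C I \<le> enat n"
    and fin: "inj_dim C X \<noteq> \<infinity>"
  shows "inj_dim C X \<le> enat n"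
proof -
  let ?S = "{m. \<exists>I d. inj_resolution C X m I d}"
  obtain m1 where "m1 \<in> ?S"
    using fin unfolding inj_dim_def by (cases "?S = {}") (auto simp: top_enat_def)
  define m where "m = (LEAST m. m \<in> ?S)"
  have mS: "m \<in> ?S" unfolding m_def using \<open>m1 \<in> ?S\<close> by (rule LeastI)
  have "m \<le> n"
  proof (rule ccontr)
    assume "\<not> m \<le> n"
    then obtain m0 where m0: "m = Suc m0" "n \<le> m0" by (cases m) auto
    obtain I d where R: "inj_resolution C X (Suc m0) I d" using mS m0 by auto
    have "proj_dim C (I (Suc m0)) \<le> enat n" using pd R unfolding inj_resolution_def by blast
    then obtain n' Q dd where "proj_resolution C (I (Suc m0)) n' Q dd" "n' \<le> n"
      unfolding proj_dim_def INF_enat_le_iff by blast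
    then obtain I' d' where "inj_resolution C X m0 I' d'"
      using inj_resolution_shorten[OF R] m0(2) by (meson order_trans)
    then have "m \<le> m0" unfolding m_def by (auto intro: Least_le)
    with m0(1) show False by simp
  qed
  then show ?thesis unfolding inj_dim_def INF_enat_le_iff using mS by blast
qed

lemma sidp_le_spdi:
  assumes spdi: "spdi C \<noteq> \<infinity>" and sidp: "sidp C \<noteq> \<infinity>"
  shows "sidp C \<le> spdi C"
proof -
  obtain n where n: "spdi C = enat n" using spdi by (cases "spdi C") auto
  have "inj_dim C P \<le> enat n" if "projective C P" for P
  proof (rule finite_inj_dim_le)
    show "proj_dim C I \<le> enat n" if "injective C I" for I
      using that n unfolding spdi_def by (metis SUP_upper mem_Collect_eq)
    show "inj_dim C P \<noteq> \<infinity>"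
      using \<open>projective C P\<close> sidp unfolding sidp_def
      by (metis SUP_upper mem_Collect_eq top.extremum_unique top_enat_def)
  qed
  then show ?thesis unfolding sidp_def n by (auto intro: SUP_least)
qed

end

definition opposite :: "('o, 'm) cat \<Rightarrow> ('o, 'm) cat" where
  "opposite C = \<lparr>Ob = Ob C, Ar = Ar C, dom = cod C, cod = dom C, cmp = (\<lambda>g f. cmp C f g),
     idm = idm C, add = add C, ngt = ngt C, zer = (\<lambda>X Y. zer C Y X)\<rparr>"

lemma opposite_simps [simp]:
  "Ob (opposite C) = Ob C" "Ar (opposite C) = Ar C" "dom (opposite C) = cod C"
  "cod (opposite C) = dom C" "cmp (opposite C) g f = cmp C f g" "idm (opposite C) = idm C"
  "add (opposite C) = add C" "ngt (opposite C) = ngt C" "zer (opposite C) X Y = zer C Y X"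
  by (simp_all add: opposite_def)

lemma hom_opposite [simp]: "hom (opposite C) X Y = hom C Y X"
  by (auto simp: hom_def)

lemma category_opposite: "category C \<Longrightarrow> category (opposite C)"
  unfolding category_def by (simp add: hom_def)

lemma preadditive_opposite: assumes p: "preadditive C" shows "preadditive (opposite C)"
proof -
  have "category C" using p unfolding preadditive_def by blast
  then show ?thesis
    unfolding preadditive_def opposite_simps hom_opposite
    by (intro conjI category_opposite) (use p in \<open>simp only: preadditive_def; blast\<close>)+
qed

lemma zero_object_opposite: "zero_object C Z \<Longrightarrow> zero_object (opposite C) Z"
  unfolding zero_object_def by simp

lemma biproduct_opposite:
  "biproduct C X Y S i1 i2 p1 p2 \<Longrightarrow> biproduct (opposite C) X Y S p1 p2 i1 i2"
  unfolding biproduct_def by simp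

lemma additive_opposite: "additive C \<Longrightarrow> additive (opposite C)"
  unfolding additive_def using preadditive_opposite zero_object_opposite biproduct_opposite
  by (metis opposite_simps(1))

lemma mono_opposite [simp]: "mono (opposite C) = epi C"
  unfolding mono_def epi_def by (auto simp: fun_eq_iff)

lemma epi_opposite [simp]: "epi (opposite C) = mono C"
  unfolding mono_def epi_def by (auto simp: fun_eq_iff)

lemma is_kernel_opposite [simp]: "is_kernel (opposite C) = is_cokernel C"
  unfolding is_kernel_def is_cokernel_def by (auto simp: fun_eq_iff)

lemma is_cokernel_opposite [simp]: "is_cokernel (opposite C) = is_kernel C"
  unfolding is_kernel_def is_cokernel_def by (auto simp: fun_eq_iff)

lemma abelian_opposite: "abelian C \<Longrightarrow> abelian (opposite C)"
  unfolding abelian_def using additive_opposite by auto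

lemma projective_opposite [simp]: "projective (opposite C) = injective C"
  unfolding projective_def injective_def by (simp add: fun_eq_iff)

lemma injective_opposite [simp]: "injective (opposite C) = projective C"
  unfolding projective_def injective_def by (simp add: fun_eq_iff)

lemma exact_at_opposite [simp]: "exact_at (opposite C) f g = exact_at C g f"
  unfolding exact_at_def by auto

lemma proj_resolution_opposite [simp]: "proj_resolution (opposite C) = inj_resolution C"
  unfolding proj_resolution_def inj_resolution_def by (simp add: fun_eq_iff)

lemma inj_resolution_opposite [simp]: "inj_resolution (opposite C) = proj_resolution C"
  unfolding proj_resolution_def inj_resolution_def by (simp add: fun_eq_iff)

lemma spdi_opposite [simp]: "spdi (opposite C) = sidp C"
  unfolding spdi_def sidp_def proj_dim_def inj_dim_def by simp

lemma sidp_opposite [simp]: "sidp (opposite C) = spdi C"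
  unfolding spdi_def sidp_def proj_dim_def inj_dim_def by simp

theorem lemmaA2:
  fixes C :: "('o, 'm) cat"
  assumes "abelian C"
    and "enough_projectives C"
    and "enough_injectives C"
    and "spdi C \<noteq> \<infinity>"
    and "sidp C \<noteq> \<infinity>"
  shows "spdi C = sidp C"
proof (rule antisym)
  interpret abelian_category C by (rule abelian_category.intro) fact
  interpret op: abelian_category "opposite C" by (rule abelian_category.intro, rule abelian_opposite) fact
  show "sidp C \<le> spdi C" using sidp_le_spdi assms(4,5) .
  show "spdi C \<le> sidp C" using op.sidp_le_spdi assms(4,5) by simp
qed

end
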